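(* A formal power series $\varphi(x)\in\mathbb{C}[[x]]$ is symplectic if and only if $\varphi(x)=\varphi\big(x/(x-1)\big)$ as formal power series. Moreover, if $\varphi(x)$ is a rational function regular at $x=0$ (identified with its Taylor series at $0$), then the following are equivalent: (1) $\varphi(x)$ is symplectic; (2) there exists a rational function $\rho(y)$ such that $\varphi(x)=\rho\big(x^2/(1-x)\big)$; (3) $\varphi(x)=\varphi\big(x/(x-1)\big)$.
   Context: A formal power series $\varphi(x)=\sum_{i\ge0}\gamma_i x^i\in\mathbb{C}[[x]]$ is called symplectic if for every $m\ge1$ one has $\sum_{k=0}^{m-1}(-1)^k\binom{m-1}{k}\gamma_{m+k}=0$. The substitution $x\mapsto x/(x-1)=-\sum_{j\ge1}x^j$ is a formal composition with a series having zero constant term. *)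

theory Defs
  imports "HOL-Computational_Algebra.Computational_Algebra"
begin

definition symplectic :: "complex fps \<Rightarrow> bool" where
  "symplectic \<phi> \<longleftrightarrow>
     (\<forall>m::nat. m \<ge> 1 \<longrightarrow>
        (\<Sum>k=0..m-1. (-1)^k * of_nat ((m-1) choose k) * fps_nth \<phi> (m+k)) = 0)"

definition sympl_subst :: "complex fps" where
  "sympl_subst = fps_X / (fps_X - 1)"

text \<open>Rational functions over C are elements of the fraction field of C[x].
  A rational polynomial is lifted coefficientwise into this field.\<close>
definition const_ratfun :: "complex \<Rightarrow> complex poly fract" where
  "const_ratfun c = to_fract [:c:]"

definition poly_at_ratfun :: "complex poly \<Rightarrow> complex poly fract \<Rightarrow> complex poly fract" where
  "poly_at_ratfun a u = poly (map_poly const_ratfun a) u"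

definition sympl_y :: "complex poly fract" where
  "sympl_y = Fract [:0, 0, 1:] [:1, -1:]"

text \<open>Taylor series at 0 of the rational function p/q, where q(0) \<noteq> 0.\<close>
definition taylor_ratfun :: "complex poly \<Rightarrow> complex poly \<Rightarrow> complex fps" where
  "taylor_ratfun p q = fps_of_poly p / fps_of_poly q"

end

theory Submission
  imports Defs
begin

text \<open>
  Let \<open>s = x/(x - 1)\<close>: an involution with \<open>(1 - x)(1 - s) = 1\<close>. The twisted substitution
  \<open>R n F = (1 - x)^n F(s)\<close> (\<open>sympl_reflect\<close>) satisfies \<open>R (m + n) (F G) = R m F \<cdot> R n G\<close>,
  and the coefficient of \<open>x^(n+1)\<close> in \<open>R n F\<close> is \<open>(-1)^(n+1)\<close> times that of \<open>F\<close>. Up to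
  sign, the \<open>j\<close>-th symplectic sum of \<open>\<phi>\<close> is the coefficient of \<open>x^(2j+1)\<close> in
  \<open>(1 - x)^j \<phi>\<close> (\<open>sympl_coeff\<close>); since \<open>(1 - x)^j \<phi>(s) = R (2j) ((1 - x)^j \<phi>)\<close>, it
  changes sign under \<open>\<phi> \<mapsto> \<phi>(s)\<close>. Hence invariant series are symplectic. Conversely, for
  symplectic \<open>\<phi>\<close> the series \<open>\<psi> = \<phi> - \<phi>(s)\<close> is anti-invariant with vanishing symplectic
  sums; by induction the sums kill its odd coefficients and anti-invariance kills its even ones.

  \<open>R n\<close> maps polynomials of degree \<open>\<le> n\<close> to polynomials of degree \<open>\<le> n\<close>, and the
  \<open>R (2n)\<close>-invariant polynomials of degree \<open>\<le> 2n\<close> are exactly the \<open>(1 - x)^n c(y)\<close> with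
  \<open>y = x^2/(1 - x)\<close> and \<open>deg c \<le> n\<close>. If \<open>\<phi> = p/q\<close> is invariant, then with \<open>Q = R n q\<close>
  both \<open>pQ\<close> and \<open>qQ\<close> are \<open>R (2n)\<close>-invariant, so \<open>p/q = pQ/(qQ)\<close> is a quotient of
  polynomials in \<open>y\<close>. Conversely, clearing denominators in \<open>a(y)/b(y)\<close> gives \<open>\<phi> B = A\<close>
  with \<open>A\<close>, \<open>B\<close> invariant, whence \<open>\<phi>(s) B = R (2n) (\<phi> B) = \<phi> B\<close>.
\<close>

lemma one_minus_X_power_nth:
  "((1 - fps_X :: 'a::comm_ring_1 fps) ^ k) $ j = (-1) ^ j * of_nat (k choose j)"
proof (induction k arbitrary: j)
  case 0
  then show ?case by (cases j) auto
next
  case (Suc k)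
  have "(1 - fps_X :: 'a fps) ^ Suc k = (1 - fps_X) ^ k - fps_X * (1 - fps_X) ^ k"
    by (simp add: algebra_simps)
  with Suc show ?case
    by (cases j) (simp_all add: algebra_simps)
qed

lemma one_minus_X_power_nth_eq_0:
  "k < j \<Longrightarrow> ((1 - fps_X :: 'a::comm_ring_1 fps) ^ k) $ j = 0"
  by (simp add: one_minus_X_power_nth binomial_eq_0)

lemma fps_const_nth_0_plus_X_mult_shift:
  "fps_const (F $ 0) + fps_X * fps_shift 1 F = (F :: 'a::comm_ring_1 fps)"
  by (rule fps_ext) simp

lemma fps_mult_nth_if_nth_below_0:
  fixes F G :: "'a::comm_semiring_0 fps"
  assumes "\<forall>i<n. F $ i = 0"
  shows "(G * F) $ n = G $ 0 * F $ n"
proof -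
  have "(G * F) $ n = G $ 0 * F $ n + (\<Sum>i=Suc 0..n. G $ i * F $ (n - i))"
    by (simp add: fps_mult_nth sum.atLeast_Suc_atMost)
  also have "(\<Sum>i=Suc 0..n. G $ i * F $ (n - i)) = 0"
    using assms by (intro sum.neutral) auto
  finally show ?thesis by simp
qed

lemma sympl_subst_nth_0 [simp]: "sympl_subst $ 0 = 0"
  by (simp add: sympl_subst_def fps_divide_unit)

lemma sympl_subst_mult_one_minus_X: "sympl_subst * (1 - fps_X) = - fps_X"
proof -
  have "inverse (fps_X - 1 :: complex fps) * (fps_X - 1) = 1"
    by (rule inverse_mult_eq_1) simp
  moreover have "sympl_subst * (1 - fps_X) = - (fps_X * (inverse (fps_X - 1) * (fps_X - 1)))"
    by (simp add: sympl_subst_def fps_divide_unit algebra_simps)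
  ultimately show ?thesis by simp
qed

lemma sympl_subst_nth_1: "sympl_subst $ 1 = -1"
  using arg_cong[OF sympl_subst_mult_one_minus_X, of "\<lambda>F. F $ 1"]
  by (simp add: algebra_simps)

lemma one_minus_X_mult_one_minus_sympl_subst: "(1 - fps_X) * (1 - sympl_subst) = 1"
  using sympl_subst_mult_one_minus_X by (simp add: algebra_simps)

lemmas compose_sympl_subst_distrib =
  fps_compose_add_distrib fps_compose_sub_distrib fps_compose_uminus
  fps_compose_mult_distrib[OF sympl_subst_nth_0]
  fps_compose_power[OF sympl_subst_nth_0, symmetric]

lemma sympl_subst_compose_sympl_subst: "sympl_subst oo sympl_subst = fps_X"
proof -
  have "(sympl_subst * (1 - fps_X)) oo sympl_subst = - sympl_subst"
    by (simp add: sympl_subst_mult_one_minus_X compose_sympl_subst_distrib)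
  then have "(sympl_subst oo sympl_subst) * (1 - sympl_subst) = fps_X * (1 - sympl_subst)"
    using one_minus_X_mult_one_minus_sympl_subst
    by (simp add: compose_sympl_subst_distrib algebra_simps)
  moreover have "1 - sympl_subst \<noteq> 0"
    by (intro fps_nonzeroI[of _ 0]) simp
  ultimately show ?thesis by simp
qed

lemma compose_sympl_subst_involutive [simp]: "(F oo sympl_subst) oo sympl_subst = F"
  by (simp flip: fps_compose_assoc add: sympl_subst_compose_sympl_subst)

definition sympl_reflect :: "nat \<Rightarrow> complex fps \<Rightarrow> complex fps" where
  "sympl_reflect n F = (1 - fps_X) ^ n * (F oo sympl_subst)"

lemma sympl_reflect_0: "sympl_reflect 0 F = F oo sympl_subst"
  by (simp add: sympl_reflect_def)

lemma sympl_reflect_nth_0 [simp]: "sympl_reflect n F $ 0 = F $ 0"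
  by (simp add: sympl_reflect_def fps_mult_nth one_minus_X_power_nth)

lemma sympl_reflect_add [simp]: "sympl_reflect n (F + G) = sympl_reflect n F + sympl_reflect n G"
  by (simp add: sympl_reflect_def fps_compose_add_distrib distrib_left)

lemma sympl_reflect_diff [simp]: "sympl_reflect n (F - G) = sympl_reflect n F - sympl_reflect n G"
  by (simp add: sympl_reflect_def fps_compose_sub_distrib right_diff_distrib)

lemma sympl_reflect_mult:
  "sympl_reflect (m + n) (F * G) = sympl_reflect m F * sympl_reflect n G"
  by (simp add: sympl_reflect_def compose_sympl_subst_distrib power_add mult_ac)

lemma sympl_reflect_zero [simp]: "sympl_reflect n 0 = 0"
  by (simp add: sympl_reflect_def)

lemma sympl_reflect_1 [simp]: "sympl_reflect n 1 = (1 - fps_X) ^ n"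
  by (simp add: sympl_reflect_def)

lemma sympl_reflect_const [simp]: "sympl_reflect n (fps_const c) = fps_const c * (1 - fps_X) ^ n"
  by (simp add: sympl_reflect_def mult.commute)

lemma sympl_reflect_const_mult [simp]:
  "sympl_reflect n (fps_const c * F) = fps_const c * sympl_reflect n F"
  using sympl_reflect_mult[of 0 n "fps_const c" F] by simp

lemma sympl_reflect_X_mult [simp]:
  "sympl_reflect (Suc n) (fps_X * F) = - fps_X * sympl_reflect n F"
  using sympl_reflect_mult[of 1 n fps_X F]
  by (simp add: sympl_reflect_def mult.commute[of "1 - fps_X"] sympl_subst_mult_one_minus_X)

lemma sympl_reflect_one_minus_X_power [simp]: "sympl_reflect n ((1 - fps_X) ^ n) = 1"
  by (simp add: sympl_reflect_def compose_sympl_subst_distrib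
      flip: power_mult_distrib add: one_minus_X_mult_one_minus_sympl_subst)

lemma sympl_reflect_double_one_minus_X_power [simp]:
  "sympl_reflect (2 * n) ((1 - fps_X) ^ n) = (1 - fps_X) ^ n"
  using sympl_reflect_mult[of n n 1 "(1 - fps_X) ^ n"] by (simp add: mult_2)

lemma sympl_reflect_involutive [simp]: "sympl_reflect n (sympl_reflect n F) = F"
proof -
  have "sympl_reflect n (sympl_reflect n F) = sympl_reflect n ((1 - fps_X) ^ n) * F"
    by (simp add: sympl_reflect_def fps_compose_mult_distrib mult_ac)
  then show ?thesis by simp
qed

lemma sympl_reflect_nth_Suc: "sympl_reflect n F $ Suc n = (-1) ^ Suc n * F $ Suc n"
proof (induction n arbitrary: F)
  case 0
  show ?case using sympl_subst_nth_1 by (simp add: sympl_reflect_0 fps_compose_nth)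
next
  case (Suc n)
  have "sympl_reflect (Suc n) F = sympl_reflect (Suc n) (fps_const (F $ 0) + fps_X * fps_shift 1 F)"
    by (simp only: fps_const_nth_0_plus_X_mult_shift)
  also have "\<dots> = fps_const (F $ 0) * (1 - fps_X) ^ Suc n - fps_X * sympl_reflect n (fps_shift 1 F)"
    by simp
  finally show ?case
    using Suc.IH by (simp add: one_minus_X_power_nth_eq_0 del: power_Suc) simp
qed

definition sympl_coeff :: "nat \<Rightarrow> complex fps \<Rightarrow> complex" where
  "sympl_coeff j F = ((1 - fps_X) ^ j * F) $ (2 * j + 1)"

lemma sympl_coeff_eq_sum:
  "sympl_coeff j F = (-1) ^ j * (\<Sum>k=0..j. (-1) ^ k * of_nat (j choose k) * F $ (Suc j + k))"
proof -
  have "sympl_coeff j F = (\<Sum>i=0..Suc (j + j). ((1 - fps_X) ^ j) $ i * F $ (Suc (j + j) - i))"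
    by (simp add: sympl_coeff_def fps_mult_nth mult_2)
  also have "\<dots> = (\<Sum>i=0..j. ((1 - fps_X) ^ j) $ i * F $ (Suc (j + j) - i))"
    by (rule sum.mono_neutral_cong_right) (auto simp: one_minus_X_power_nth)
  also have "\<dots> = (\<Sum>k=0..j. ((1 - fps_X) ^ j) $ (j - k) * F $ (Suc j + k))"
    by (subst sum.atLeastAtMost_rev) (auto intro!: sum.cong simp: Suc_diff_le)
  also have "\<dots> = (\<Sum>k=0..j. (-1) ^ j * ((-1) ^ k * of_nat (j choose k) * F $ (Suc j + k)))"
  proof (rule sum.cong)
    fix k assume "k \<in> {0..j}"
    then have "(-1 :: complex) ^ (j - k) = (-1) ^ j * (-1) ^ k"
      by (auto simp: minus_one_power_iff even_diff_nat)
    with \<open>k \<in> {0..j}\<close> show "((1 - fps_X) ^ j) $ (j - k) * F $ (Suc j + k)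
        = (-1) ^ j * ((-1) ^ k * of_nat (j choose k) * F $ (Suc j + k))"
      by (simp add: one_minus_X_power_nth binomial_symmetric[symmetric])
  qed simp
  finally show ?thesis by (simp add: sum_distrib_left)
qed

lemma symplectic_iff_sympl_coeff: "symplectic F \<longleftrightarrow> (\<forall>j. sympl_coeff j F = 0)"
proof -
  have "(\<forall>m::nat. 1 \<le> m \<longrightarrow> P m) \<longleftrightarrow> (\<forall>j. P (Suc j))" for P
    by (auto dest!: Suc_le_D)
  then show ?thesis
    unfolding symplectic_def sympl_coeff_eq_sum by simp
qed

lemma sympl_coeff_compose_sympl_subst: "sympl_coeff j (F oo sympl_subst) = - sympl_coeff j F"
proof -
  have "(1 - fps_X) ^ j * (F oo sympl_subst) = sympl_reflect (j + j) ((1 - fps_X) ^ j * F)"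
    by (simp add: sympl_reflect_mult) (simp add: sympl_reflect_def)
  then show ?thesis
    by (simp add: sympl_coeff_def mult_2 sympl_reflect_nth_Suc)
qed

lemma fps_eq_0_if_anti_invariant:
  assumes anti: "F oo sympl_subst = - F" and coeff: "\<And>j. sympl_coeff j F = 0"
  shows "F = 0"
proof -
  have "F $ n = 0" for n
  proof (induction n rule: less_induct)
    case (less n)
    then have leading: "((1 - fps_X) ^ k * F) $ n = F $ n" for k
      by (simp add: fps_mult_nth_if_nth_below_0 one_minus_X_power_nth)
    show ?case
    proof (cases n)
      case 0
      then show ?thesis using arg_cong[OF anti, of "\<lambda>G. G $ 0"] by simp
    next
      case (Suc m)
      show ?thesis
      proof (cases "even n")
        case True
        have "F $ n = sympl_reflect m F $ n"
          using True by (simp add: Suc sympl_reflect_nth_Suc)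
        also have "\<dots> = - F $ n"
          by (simp add: sympl_reflect_def anti leading)
        finally show ?thesis by simp
      next
        case False
        then obtain j where "n = 2 * j + 1" by (elim oddE)
        then show ?thesis using coeff leading[of j] by (simp add: sympl_coeff_def)
      qed
    qed
  qed
  then show ?thesis by (simp add: fps_eq_iff)
qed

lemma symplectic_iff_invariant: "symplectic \<phi> \<longleftrightarrow> \<phi> = \<phi> oo sympl_subst"
proof
  assume "\<phi> = \<phi> oo sympl_subst"
  then have "sympl_coeff j \<phi> = - sympl_coeff j \<phi>" for j
    by (metis sympl_coeff_compose_sympl_subst)
  then show "symplectic \<phi>" by (simp add: symplectic_iff_sympl_coeff)
next
  assume "symplectic \<phi>"
  define \<psi> where "\<psi> = \<phi> - (\<phi> oo sympl_subst)"
  have "\<psi> oo sympl_subst = - \<psi>"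
    by (simp add: \<psi>_def fps_compose_sub_distrib)
  moreover have "sympl_coeff j \<psi> = 0" for j
    using \<open>symplectic \<phi>\<close> sympl_coeff_compose_sympl_subst
    by (simp add: \<psi>_def symplectic_iff_sympl_coeff sympl_coeff_def algebra_simps)
  ultimately have "\<psi> = 0" by (rule fps_eq_0_if_anti_invariant)
  then show "\<phi> = \<phi> oo sympl_subst" by (simp add: \<psi>_def)
qed

lemma to_fract_power: "to_fract (p ^ n) = to_fract p ^ n"
  by (induction n) simp_all

lemma poly_at_ratfun_0 [simp]: "poly_at_ratfun 0 u = 0"
  by (simp add: poly_at_ratfun_def)

lemma poly_at_ratfun_pCons:
  "poly_at_ratfun (pCons a c) u = to_fract [:a:] + u * poly_at_ratfun c u"
  by (simp add: poly_at_ratfun_def map_poly_pCons const_ratfun_def)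

lemma poly_at_ratfun_const [simp]: "poly_at_ratfun [:a:] u = to_fract [:a:]"
  by (simp add: poly_at_ratfun_pCons)

lemma sympl_y_eq: "sympl_y = to_fract [:0, 0, 1:] / to_fract [:1, -1:]"
  by (simp add: sympl_y_def Fract_conv_to_fract)

lemma one_minus_x_power_mult_pCons_at_sympl_y:
  "to_fract [:1, -1:] ^ Suc m * poly_at_ratfun (pCons a c) sympl_y =
     to_fract [:a:] * to_fract [:1, -1:] ^ Suc m
     + to_fract [:0, 0, 1:] * (to_fract [:1, -1:] ^ m * poly_at_ratfun c sympl_y)"
proof -
  have "to_fract [:1, -1 :: complex:] \<noteq> 0" by simp
  then show ?thesis
    by (simp add: poly_at_ratfun_pCons sympl_y_eq field_simps del: to_fract_eq_0_iff)
qed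

lemma sympl_reflect_poly:
  "degree P \<le> n \<Longrightarrow>
     \<exists>R. degree R \<le> n \<and> fps_of_poly R = sympl_reflect n (fps_of_poly P)"
proof (induction n arbitrary: P)
  case 0
  define a where "a = coeff P 0"
  have P: "P = [:a:]" using degree_0_id[of P] 0 by (simp add: a_def)
  show ?case using P by (intro exI[of _ P]) (simp add: fps_of_poly_const)
next
  case (Suc m)
  obtain a P' where P: "P = pCons a P'" by (cases P)
  with Suc.prems have "degree P' \<le> m" by (cases "P' = 0") auto
  then obtain R' where R': "degree R' \<le> m" "fps_of_poly R' = sympl_reflect m (fps_of_poly P')"
    using Suc.IH by blast
  define R where "R = [:a:] * [:1, -1:] ^ Suc m - pCons 0 R'"
  have "degree R \<le> Suc m"
    unfolding R_def
  proof (rule degree_diff_le)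
    show "degree ([:a:] * [:1, -1:] ^ Suc m) \<le> Suc m"
      by (simp del: power_Suc)
    show "degree (pCons 0 R') \<le> Suc m"
      using R'(1) by (simp add: degree_pCons_eq_if)
  qed
  moreover have "fps_of_poly R = sympl_reflect (Suc m) (fps_of_poly P)"
    unfolding R_def P fps_of_poly_diff fps_of_poly_mult fps_of_poly_power fps_of_poly_const
    by (simp add: R'(2) fps_of_poly_pCons mult.commute[of _ fps_X])
  ultimately show ?case by blast
qed

lemma poly_at_sympl_y_clear_denominator:
  "degree c \<le> n \<Longrightarrow>
     \<exists>H. to_fract H = to_fract [:1, -1:] ^ n * poly_at_ratfun c sympl_y
       \<and> sympl_reflect (2 * n) (fps_of_poly H) = fps_of_poly H"
proof (induction n arbitrary: c)
  case 0
  define a where "a = coeff c 0"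
  have c: "c = [:a:]" using degree_0_id[of c] 0 by (simp add: a_def)
  show ?case using c by (intro exI[of _ c]) (simp add: fps_of_poly_const)
next
  case (Suc m)
  obtain a c' where c: "c = pCons a c'" by (cases c)
  with Suc.prems have "degree c' \<le> m" by (cases "c' = 0") auto
  then obtain H' where H': "to_fract H' = to_fract [:1, -1:] ^ m * poly_at_ratfun c' sympl_y"
      "sympl_reflect (2 * m) (fps_of_poly H') = fps_of_poly H'"
    using Suc.IH by blast
  define H where "H = [:a:] * [:1, -1:] ^ Suc m + [:0, 0, 1:] * H'"
  have "to_fract H = to_fract [:1, -1:] ^ Suc m * poly_at_ratfun c sympl_y"
    unfolding H_def c one_minus_x_power_mult_pCons_at_sympl_y to_fract_add to_fract_mult
      to_fract_power H'(1) ..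
  moreover have H: "fps_of_poly H = fps_const a * (1 - fps_X) ^ Suc m + fps_X * (fps_X * fps_of_poly H')"
    unfolding H_def fps_of_poly_add fps_of_poly_mult fps_of_poly_power fps_of_poly_const
    by (simp add: fps_of_poly_pCons mult_ac)
  have "sympl_reflect (2 * Suc m) (fps_X * (fps_X * fps_of_poly H'))
      = fps_X * (fps_X * fps_of_poly H')"
    using H'(2) by simp
  then have "sympl_reflect (2 * Suc m) (fps_of_poly H) = fps_of_poly H"
    unfolding H by (simp only: sympl_reflect_add sympl_reflect_const_mult
        sympl_reflect_double_one_minus_X_power)
  ultimately show ?case by blast
qed

lemma sympl_reflect_invariant_poly_decompose:
  assumes deg: "degree H \<le> 2 * Suc m"
    and inv: "sympl_reflect (2 * Suc m) (fps_of_poly H) = fps_of_poly H"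
  obtains K where "H = [:coeff H 0:] * [:1, -1:] ^ Suc m + [:0, 0, 1:] * K"
    "degree K \<le> 2 * m" "sympl_reflect (2 * m) (fps_of_poly K) = fps_of_poly K"
proof -
  txt \<open>Removing \<open>a (1 - x)^(m+1)\<close> leaves an invariant multiple \<open>x G\<close>; then \<open>G\<close> is
    anti-invariant, hence also divisible by \<open>x\<close>.\<close>
  define a where "a = coeff H 0"
  define H1 where "H1 = H - [:a:] * [:1, -1:] ^ Suc m"
  have fps_H1: "fps_of_poly H1 = fps_of_poly H - fps_const a * (1 - fps_X) ^ Suc m"
    unfolding H1_def fps_of_poly_diff fps_of_poly_mult fps_of_poly_power fps_of_poly_const by simp
  have inv_H1: "sympl_reflect (2 * Suc m) (fps_of_poly H1) = fps_of_poly H1"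
    unfolding fps_H1 sympl_reflect_diff sympl_reflect_const_mult
      sympl_reflect_double_one_minus_X_power inv ..
  have "coeff H1 0 = 0"
    by (simp add: H1_def a_def coeff_0_power)
  then obtain G where G: "H1 = pCons 0 G" by (cases H1) auto
  have "fps_X * sympl_reflect (Suc (2 * m)) (fps_of_poly G) = fps_X * - fps_of_poly G"
    using inv_H1 by (simp add: G fps_of_poly_pCons mult.commute[of _ fps_X] minus_equation_iff)
  then have inv_G: "sympl_reflect (Suc (2 * m)) (fps_of_poly G) = - fps_of_poly G"
    by (simp only: mult_cancel_left fps_X_neq_zero simp_thms)
  have "coeff G 0 = 0"
    using arg_cong[OF inv_G, of "\<lambda>F. F $ 0"] by simp
  then obtain K where K: "G = pCons 0 K" by (cases G) auto
  show thesis
  proof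
    show "H = [:coeff H 0:] * [:1, -1:] ^ Suc m + [:0, 0, 1:] * K"
      using H1_def G K by (simp add: a_def algebra_simps)
    have "degree H1 \<le> 2 * Suc m"
      unfolding H1_def
    proof (rule degree_diff_le)
      show "degree ([:a:] * [:1, -1:] ^ Suc m) \<le> 2 * Suc m"
        by (simp del: power_Suc)
    qed (rule deg)
    then show "degree K \<le> 2 * m"
      by (simp add: G K degree_pCons_eq_if split: if_splits)
    have "fps_X * sympl_reflect (2 * m) (fps_of_poly K) = fps_X * fps_of_poly K"
      using inv_G by (simp add: K fps_of_poly_pCons mult.commute[of _ fps_X])
    then show "sympl_reflect (2 * m) (fps_of_poly K) = fps_of_poly K"
      by simp
  qed
qed

lemma sympl_reflect_invariant_poly_in_sympl_y:
  "degree H \<le> 2 * n \<Longrightarrow> sympl_reflect (2 * n) (fps_of_poly H) = fps_of_poly H \<Longrightarrow>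
     \<exists>c. to_fract H = to_fract [:1, -1:] ^ n * poly_at_ratfun c sympl_y"
proof (induction n arbitrary: H)
  case 0
  define a where "a = coeff H 0"
  have H: "H = [:a:]" using degree_0_id[of H] 0 by (simp add: a_def)
  show ?case using H by (intro exI[of _ H]) simp
next
  case (Suc m)
  obtain K where K: "H = [:coeff H 0:] * [:1, -1:] ^ Suc m + [:0, 0, 1:] * K"
      "degree K \<le> 2 * m" "sympl_reflect (2 * m) (fps_of_poly K) = fps_of_poly K"
    using sympl_reflect_invariant_poly_decompose[OF Suc.prems] by blast
  obtain c where c: "to_fract K = to_fract [:1, -1:] ^ m * poly_at_ratfun c sympl_y"
    using Suc.IH[OF K(2,3)] by blast
  have "to_fract H = to_fract [:1, -1:] ^ Suc m * poly_at_ratfun (pCons (coeff H 0) c) sympl_y"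
    unfolding one_minus_x_power_mult_pCons_at_sympl_y
    by (subst K(1)) (simp only: to_fract_add to_fract_mult to_fract_power c)
  then show ?case ..
qed

lemma fps_of_poly_mult_taylor_ratfun:
  assumes "poly q 0 \<noteq> 0"
  shows "fps_of_poly q * taylor_ratfun p q = fps_of_poly p"
proof -
  have q0: "fps_of_poly q $ 0 \<noteq> 0"
    using assms by (simp add: poly_0_coeff_0)
  then have "inverse (fps_of_poly q) * fps_of_poly q = 1"
    by (rule inverse_mult_eq_1)
  then show ?thesis
    by (simp add: taylor_ratfun_def fps_divide_unit[OF q0] mult_ac)
qed

lemma taylor_ratfun_invariant_if_in_sympl_y:
  assumes q0: "poly q 0 \<noteq> 0"
    and eq: "Fract p q = poly_at_ratfun a sympl_y / poly_at_ratfun b sympl_y"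
  shows "taylor_ratfun p q = taylor_ratfun p q oo sympl_subst"
proof -
  define \<phi> where "\<phi> = taylor_ratfun p q"
  define n where "n = max (degree a) (degree b)"
  obtain A where A: "to_fract A = to_fract [:1, -1:] ^ n * poly_at_ratfun a sympl_y"
      "sympl_reflect (2 * n) (fps_of_poly A) = fps_of_poly A"
    using poly_at_sympl_y_clear_denominator[of a n] by (auto simp: n_def)
  obtain B where B: "to_fract B = to_fract [:1, -1:] ^ n * poly_at_ratfun b sympl_y"
      "sympl_reflect (2 * n) (fps_of_poly B) = fps_of_poly B"
    using poly_at_sympl_y_clear_denominator[of b n] by (auto simp: n_def)
  have q: "q \<noteq> 0" using q0 by auto
  have pq: "to_fract p / to_fract q = to_fract A / to_fract B"
    using eq by (simp add: A(1) B(1) Fract_conv_to_fract)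
  show ?thesis
  proof (cases "B = 0")
    case True
    with pq q have "p = 0" by simp
    then show ?thesis by (simp add: taylor_ratfun_def)
  next
    case False
    with pq q have "p * B = A * q"
      by (simp add: frac_eq_eq flip: to_fract_mult)
    then have "fps_of_poly q * (\<phi> * fps_of_poly B) = fps_of_poly q * fps_of_poly A"
      using fps_of_poly_mult_taylor_ratfun[OF q0, of p]
      by (metis \<phi>_def fps_of_poly_mult mult.assoc mult.commute)
    then have \<phi>B: "\<phi> * fps_of_poly B = fps_of_poly A"
      using q by simp
    have "(\<phi> oo sympl_subst) * fps_of_poly B = sympl_reflect (0 + 2 * n) (\<phi> * fps_of_poly B)"
      by (simp only: sympl_reflect_mult B(2) sympl_reflect_0)
    also have "\<dots> = \<phi> * fps_of_poly B"
      by (simp add: \<phi>B A(2))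
    finally show ?thesis
      using False by (simp add: \<phi>_def)
  qed
qed

lemma invariant_taylor_ratfun_clear_denominator:
  assumes q0: "poly q 0 \<noteq> 0"
    and inv: "taylor_ratfun p q oo sympl_subst = taylor_ratfun p q"
    and deg: "degree p \<le> n" "degree q \<le> n"
  obtains Q where "Q \<noteq> 0" "degree (p * Q) \<le> 2 * n" "degree (q * Q) \<le> 2 * n"
    "sympl_reflect (2 * n) (fps_of_poly (p * Q)) = fps_of_poly (p * Q)"
    "sympl_reflect (2 * n) (fps_of_poly (q * Q)) = fps_of_poly (q * Q)"
proof -
  obtain P where P: "fps_of_poly P = sympl_reflect n (fps_of_poly p)"
    using sympl_reflect_poly[OF deg(1)] by blast
  obtain Q where Q: "degree Q \<le> n" "fps_of_poly Q = sympl_reflect n (fps_of_poly q)"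
    using sympl_reflect_poly[OF deg(2)] by blast
  have reflect_Q: "sympl_reflect n (fps_of_poly Q) = fps_of_poly q"
    by (simp add: Q(2))
  have "fps_of_poly P = sympl_reflect (n + 0) (fps_of_poly q * taylor_ratfun p q)"
    using fps_of_poly_mult_taylor_ratfun[OF q0] by (simp add: P)
  also have "\<dots> = fps_of_poly Q * taylor_ratfun p q"
    by (simp only: sympl_reflect_mult sympl_reflect_0 inv Q(2)[symmetric])
  finally have "fps_of_poly (p * Q) = fps_of_poly (q * P)"
    using fps_of_poly_mult_taylor_ratfun[OF q0, of p] by (simp add: fps_of_poly_mult mult_ac)
  then have pQ_qP: "p * Q = q * P"
    by (simp only: fps_of_poly_eq_iff)
  show thesis
  proof
    show "Q \<noteq> 0"
      using reflect_Q q0 by auto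
    show "degree (p * Q) \<le> 2 * n" "degree (q * Q) \<le> 2 * n"
      using degree_mult_le[of p Q] degree_mult_le[of q Q] Q(1) deg by simp_all
    have "sympl_reflect (2 * n) (fps_of_poly (p * Q))
        = sympl_reflect n (fps_of_poly p) * sympl_reflect n (fps_of_poly Q)"
      by (simp only: mult_2 fps_of_poly_mult sympl_reflect_mult)
    also have "\<dots> = fps_of_poly (q * P)"
      by (simp add: reflect_Q fps_of_poly_mult mult.commute flip: P)
    finally show "sympl_reflect (2 * n) (fps_of_poly (p * Q)) = fps_of_poly (p * Q)"
      by (simp only: pQ_qP)
    show "sympl_reflect (2 * n) (fps_of_poly (q * Q)) = fps_of_poly (q * Q)"
      by (simp add: mult_2 fps_of_poly_mult sympl_reflect_mult reflect_Q flip: Q(2))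
  qed
qed

lemma taylor_ratfun_in_sympl_y_if_invariant:
  assumes q0: "poly q 0 \<noteq> 0"
    and inv: "taylor_ratfun p q = taylor_ratfun p q oo sympl_subst"
  shows "\<exists>a b. b \<noteq> 0 \<and> Fract p q = poly_at_ratfun a sympl_y / poly_at_ratfun b sympl_y"
proof -
  define n where "n = max (degree p) (degree q)"
  have deg: "degree p \<le> n" "degree q \<le> n"
    by (simp_all add: n_def)
  obtain Q where Q: "Q \<noteq> 0" "degree (p * Q) \<le> 2 * n" "degree (q * Q) \<le> 2 * n"
      "sympl_reflect (2 * n) (fps_of_poly (p * Q)) = fps_of_poly (p * Q)"
      "sympl_reflect (2 * n) (fps_of_poly (q * Q)) = fps_of_poly (q * Q)"
    using invariant_taylor_ratfun_clear_denominator[OF q0 inv[symmetric] deg] by blast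
  obtain a where a: "to_fract (p * Q) = to_fract [:1, -1:] ^ n * poly_at_ratfun a sympl_y"
    using sympl_reflect_invariant_poly_in_sympl_y[OF Q(2,4)] by blast
  obtain b where b: "to_fract (q * Q) = to_fract [:1, -1:] ^ n * poly_at_ratfun b sympl_y"
    using sympl_reflect_invariant_poly_in_sympl_y[OF Q(3,5)] by blast
  have q: "q \<noteq> 0" using q0 by auto
  have "Fract p q = to_fract (p * Q) / to_fract (q * Q)"
    using q Q(1) by (simp add: Fract_conv_to_fract)
  also have "\<dots> = poly_at_ratfun a sympl_y / poly_at_ratfun b sympl_y"
    by (simp add: a b del: to_fract_mult)
  finally have "Fract p q = poly_at_ratfun a sympl_y / poly_at_ratfun b sympl_y" .
  moreover have "b \<noteq> 0"
    using b Q(1) q by auto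
  ultimately show ?thesis by blast
qed

theorem theorem1p6:
  shows "(\<forall>\<phi> :: complex fps. symplectic \<phi> \<longleftrightarrow> \<phi> = fps_compose \<phi> sympl_subst)
    \<and> (\<forall>p q :: complex poly. poly q 0 \<noteq> 0 \<longrightarrow>
         (symplectic (taylor_ratfun p q) \<longleftrightarrow>
            (\<exists>a b :: complex poly. b \<noteq> 0 \<and>
               Fract p q = poly_at_ratfun a sympl_y / poly_at_ratfun b sympl_y))
       \<and> (symplectic (taylor_ratfun p q) \<longleftrightarrow>
            taylor_ratfun p q = fps_compose (taylor_ratfun p q) sympl_subst))"
  using symplectic_iff_invariant taylor_ratfun_invariant_if_in_sympl_y
    taylor_ratfun_in_sympl_y_if_invariant by blast

end
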